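(* Let $\mathcal{S}$ be a nonempty semigroup with operation $*$, and let $E(\mathcal{S})$ be its set of idempotents. Suppose $|\mathcal{S}\setminus E(\mathcal{S})|$ is finite. Then every $\mathcal{S}$-valued sequence $T=a_1a_2\cdots a_{\ell}$ of length $\ell=|\mathcal{S}\setminus E(\mathcal{S})|+1$ is not strongly idempotent-product free; that is, there exist indices $1\le i_1<i_2<\cdots<i_t\le \ell$ with $t\ge 1$ such that $a_{i_1}*a_{i_2}*\cdots*a_{i_t}\in E(\mathcal{S})$.
   Context: An element $x$ of a semigroup $\mathcal{S}$ is an idempotent if $x*x=x$. A sequence means a finite ordered list of (not necessarily distinct) elements of $\mathcal{S}$; a subsequence keeps terms in their original order. A sequence is strongly idempotent-product free if no nonempty subsequence has product (taken in the natural order of the sequence) equal to an idempotent. *)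

theory Defs
  imports Main
begin

definition idempotent :: "'a::semigroup_mult \<Rightarrow> bool" where
  "idempotent x \<longleftrightarrow> x * x = x"

fun sprod :: "'a::semigroup_mult list \<Rightarrow> 'a" where
  "sprod [] = undefined"
| "sprod (x # xs) = foldl (*) x xs"

definition strongly_idempotent_product_free :: "'a::semigroup_mult list \<Rightarrow> bool" where
  "strongly_idempotent_product_free T \<longleftrightarrow>
     (\<forall>I. I \<noteq> {} \<and> I \<subseteq> {..<length T} \<longrightarrow> \<not> idempotent (sprod (nths T I)))"

end

theory Submission
  imports Defs
begin

text \<open>Let \<open>P(T)\<close> be the set of products of nonempty subsequences of \<open>T\<close>. Appending \<open>a\<close>
  to \<open>xs\<close> gives \<open>P(xs a) \<supseteq> P(xs) \<union> {a} \<union> P(xs) a\<close>. If the inclusion \<open>P(xs) \<subseteq> P(xs a)\<close> were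
  an equality, the finite set \<open>P(xs)\<close> would contain \<open>a\<close> and be closed under right
  multiplication by \<open>a\<close>, hence contain all powers of \<open>a\<close>, and some power of an element with
  finitely many powers is idempotent. So for an idempotent-product free sequence \<open>P(T)\<close>
  grows with every letter, giving \<open>|T| \<le> |P(T)| \<le> |S \<setminus> E(S)|\<close>.\<close>

text \<open>Semigroups have no unit, so powers are indexed from exponent one: \<open>spow a n = a^(n+1)\<close>.\<close>

fun spow :: "'a::semigroup_mult \<Rightarrow> nat \<Rightarrow> 'a" where
  "spow a 0 = a"
| "spow a (Suc n) = spow a n * a"

lemma spow_add: "spow a m * spow a n = spow a (m + n + 1)"
  by (induction n) (simp_all add: mult.assoc[symmetric])

lemma spow_shift_period:
  assumes "spow a (m + d) = spow a m" and "m \<le> n"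
  shows "spow a (n + d) = spow a n"
  using assms(2) by (induction n rule: dec_induct) (simp_all add: assms(1))

lemma spow_add_multiple_period:
  assumes "spow a (m + d) = spow a m" and "m \<le> n"
  shows "spow a (n + k * d) = spow a n"
proof (induction k)
  case (Suc k)
  have "spow a (n + k * d + d) = spow a (n + k * d)"
    using spow_shift_period[OF assms(1)] assms(2) by simp
  with Suc show ?case by (simp add: ac_simps)
qed simp

lemma finite_powers_idempotent:
  assumes "finite (range (spow a))"
  obtains n where "idempotent (spow a n)"
proof -
  obtain m p where period: "spow a (m + Suc p) = spow a m"
  proof -
    obtain x y where "x < y" "spow a x = spow a y"
      using assms by (metis finite_imageD inj_on_def infinite_UNIV_nat linorder_neqE_nat)
    then show thesis using that[of x "y - x - 1"] by simp
  qed
  \<comment> \<open>\<open>n \<ge> m\<close> and \<open>n + 1\<close> is a multiple of the period \<open>Suc p\<close>\<close>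
  define n where "n = m + (m + 1) * p"
  have "n + n + 1 = n + (m + 1) * Suc p"
    by (simp add: n_def)
  then have "spow a n * spow a n = spow a (n + (m + 1) * Suc p)"
    by (simp only: spow_add)
  also have "\<dots> = spow a n"
    by (rule spow_add_multiple_period[OF period]) (simp add: n_def)
  finally show thesis using that unfolding idempotent_def by blast
qed

lemma closed_under_right_mult_idempotent:
  fixes S :: "'a::semigroup_mult set"
  assumes "finite S" and "a \<in> S" and closed: "\<And>x. x \<in> S \<Longrightarrow> x * a \<in> S"
  obtains e where "e \<in> S" and "idempotent e"
proof -
  have powers: "spow a n \<in> S" for n
    by (induction n) (simp_all add: \<open>a \<in> S\<close> closed)
  then have "finite (range (spow a))"
    using \<open>finite S\<close> by (meson finite_subset image_subsetI)
  then obtain n where "idempotent (spow a n)"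
    by (rule finite_powers_idempotent)
  with powers that show thesis by blast
qed

lemma nths_insert_length: "nths xs (insert (length xs) A) = nths xs A"
  unfolding nths_def by (rule arg_cong[where f="map fst"], rule filter_cong) (auto simp: set_zip)

lemma nths_snoc: "nths (xs @ [a]) A = nths xs A @ (if length xs \<in> A then [a] else [])"
  by (simp add: nths_append)

lemma sprod_snoc: "xs \<noteq> [] \<Longrightarrow> sprod (xs @ [a]) = sprod xs * a"
  by (cases xs) simp_all

definition subseq_products :: "'a::semigroup_mult list \<Rightarrow> 'a set" where
  "subseq_products T = {sprod (nths T I) | I. I \<noteq> {} \<and> I \<subseteq> {..<length T}}"

lemma subseq_productsI:
  "I \<noteq> {} \<Longrightarrow> I \<subseteq> {..<length T} \<Longrightarrow> sprod (nths T I) \<in> subseq_products T"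
  unfolding subseq_products_def by blast

lemma subseq_productsE:
  assumes "x \<in> subseq_products T"
  obtains I where "I \<noteq> {}" "I \<subseteq> {..<length T}" "x = sprod (nths T I)"
  using assms unfolding subseq_products_def by blast

lemma strongly_idempotent_product_free_iff:
  "strongly_idempotent_product_free T \<longleftrightarrow> subseq_products T \<subseteq> {x. \<not> idempotent x}"
  unfolding strongly_idempotent_product_free_def subseq_products_def by blast

lemma subseq_products_snoc:
  "insert a (subseq_products xs \<union> (\<lambda>x. x * a) ` subseq_products xs) \<subseteq> subseq_products (xs @ [a])"
  (is "_ \<subseteq> ?P")
proof -
  have "a \<in> ?P"
  proof -
    have "sprod (nths (xs @ [a]) {length xs}) \<in> ?P"
      by (rule subseq_productsI) auto
    then show ?thesis
      using nths_insert_length[of xs "{}"] by (simp add: nths_snoc)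
  qed
  moreover have "sprod (nths xs I) \<in> ?P \<and> sprod (nths xs I) * a \<in> ?P"
    if "I \<noteq> {}" "I \<subseteq> {..<length xs}" for I
  proof
    have "sprod (nths (xs @ [a]) I) \<in> ?P"
      by (rule subseq_productsI) (use that in auto)
    moreover have "length xs \<notin> I"
      using that(2) by auto
    ultimately show "sprod (nths xs I) \<in> ?P"
      by (simp add: nths_snoc)
    have "nths xs I \<noteq> []"
      using that by (auto simp: set_nths simp flip: set_empty)
    moreover have "sprod (nths (xs @ [a]) (insert (length xs) I)) \<in> ?P"
      by (rule subseq_productsI) (use that in auto)
    ultimately show "sprod (nths xs I) * a \<in> ?P"
      by (simp add: nths_snoc nths_insert_length sprod_snoc)
  qed
  ultimately show ?thesis
    by (auto elim!: subseq_productsE)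
qed

lemma card_subseq_products_ge_length:
  fixes T :: "'a::semigroup_mult list"
  assumes "finite {x::'a. \<not> idempotent x}" and "strongly_idempotent_product_free T"
  shows "length T \<le> card (subseq_products T)"
  using assms(2)
proof (induction T rule: rev_induct)
  case (snoc a xs)
  have grow: "insert a (subseq_products xs \<union> (\<lambda>x. x * a) ` subseq_products xs)
      \<subseteq> subseq_products (xs @ [a])"
    by (rule subseq_products_snoc)
  have no_idempotent: "subseq_products (xs @ [a]) \<subseteq> {x. \<not> idempotent x}"
    using snoc.prems by (simp add: strongly_idempotent_product_free_iff)
  then have finite: "finite (subseq_products (xs @ [a]))"
    using assms(1) by (rule finite_subset)
  have "strongly_idempotent_product_free xs"
    using grow no_idempotent by (auto simp: strongly_idempotent_product_free_iff)
  then have IH: "length xs \<le> card (subseq_products xs)"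
    by (rule snoc.IH)
  have "subseq_products xs \<noteq> subseq_products (xs @ [a])"
  proof
    assume eq: "subseq_products xs = subseq_products (xs @ [a])"
    obtain e where "e \<in> subseq_products xs" and "idempotent e"
    proof (rule closed_under_right_mult_idempotent)
      show "finite (subseq_products xs)"
        using finite eq by simp
      show "a \<in> subseq_products xs" "\<And>x. x \<in> subseq_products xs \<Longrightarrow> x * a \<in> subseq_products xs"
        using grow unfolding eq by blast+
    qed
    with no_idempotent eq show False
      by blast
  qed
  with grow finite have "card (subseq_products xs) < card (subseq_products (xs @ [a]))"
    by (intro psubset_card_mono) auto
  with IH show ?case
    by simp
qed simp

theorem proposition1p1:
  fixes T :: "'a::semigroup_mult list"
  assumes "finite {x::'a. \<not> idempotent x}"
    and "length T = card {x::'a. \<not> idempotent x} + 1"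
  shows "\<not> strongly_idempotent_product_free T"
proof
  assume free: "strongly_idempotent_product_free T"
  then have "card (subseq_products T) \<le> card {x::'a. \<not> idempotent x}"
    using assms(1) by (intro card_mono) (simp_all add: strongly_idempotent_product_free_iff)
  moreover have "length T \<le> card (subseq_products T)"
    using assms(1) free by (rule card_subseq_products_ge_length)
  ultimately show False
    using assms(2) by simp
qed

end
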